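(* Let $\kappa$ be a cumulant function with effective domain $\Theta$ satisfying Assumption (A1), let $\varphi>0$, $j\le k$ be integers, and let $Y_j,\dots,Y_k$ be independent with $Y_i\sim\mathrm{EDF}(\theta_i,v_i,\varphi,\kappa)$, $v_i>0$, $\theta_i\in\mathring\Theta$, and $\theta_j\le\dots\le\theta_k$. Put $v_{j:k}=\sum_{i=j}^k v_i$ and $Z_{j:k}=\frac{1}{v_{j:k}}\sum_{i=j}^k v_iY_i$. Then $Z^-_{j:k}\le_{st}Z_{j:k}\le_{st}Z^+_{j:k}$ for $Z^-_{j:k}\sim\mathrm{EDF}(\theta_j,v_{j:k},\varphi,\kappa)$ and $Z^+_{j:k}\sim\mathrm{EDF}(\theta_k,v_{j:k},\varphi,\kappa)$.
   Context: A real random variable $Y$ follows $\mathrm{EDF}(\theta,v,\varphi,\kappa)$ if it has density $f(y)=\exp\{(y\theta-\kappa(\theta))/(\varphi/v)+a(y;v/\varphi)\}$ with respect to a $\sigma$-finite measure $\nu$ on $\mathbb R$ not depending on $\theta$; $\theta\in\Theta$ is the canonical parameter, $\Theta$ the effective domain, $\kappa$ the cumulant function, $v>0$ the volume, $\varphi>0$ the dispersion parameter, $a$ a normalizing function. Assumption (A1): $\Theta$ has non-empty interior $\mathring{\Theta}$ and the dominating measures are not a single point mass. $X\le_{st}Y$ means $\mathbb P(X\le x)\ge\mathbb P(Y\le x)$ for all $x\in\mathbb R$. *)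

theory Defs
  imports "HOL-Probability.Probability"
begin

text \<open>The dominating measure and the normalizing
function may depend on the weight w = v/phi (but not on theta):
nu w is the sigma-finite dominating measure on the reals and a y w is a(y; w).\<close>

definition EDF :: "(real \<Rightarrow> real measure) \<Rightarrow> (real \<Rightarrow> real \<Rightarrow> real) \<Rightarrow> (real \<Rightarrow> real)
    \<Rightarrow> real \<Rightarrow> real \<Rightarrow> real \<Rightarrow> real measure" where
  "EDF \<nu> a \<kappa> \<theta> v \<phi> =
     density (\<nu> (v / \<phi>)) (\<lambda>y. ennreal (exp ((y * \<theta> - \<kappa> \<theta>) / (\<phi> / v) + a y (v / \<phi>))))"

definition cumulant_fun :: "(real \<Rightarrow> real measure) \<Rightarrow> (real \<Rightarrow> real \<Rightarrow> real) \<Rightarrow> (real \<Rightarrow> real)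
    \<Rightarrow> real set \<Rightarrow> bool" where
  "cumulant_fun \<nu> a \<kappa> \<Theta> \<longleftrightarrow>
     (\<forall>w>0. sets (\<nu> w) = sets borel \<and> sigma_finite_measure (\<nu> w)
        \<and> (\<lambda>y. a y w) \<in> borel_measurable borel
        \<and> (\<forall>\<theta>. \<theta> \<in> \<Theta> \<longleftrightarrow> (\<integral>\<^sup>+ y. ennreal (exp (y * \<theta> * w + a y w)) \<partial>\<nu> w) < \<infinity>)
        \<and> (\<forall>\<theta>\<in>\<Theta>. (\<integral>\<^sup>+ y. ennreal (exp ((y * \<theta> - \<kappa> \<theta>) * w + a y w)) \<partial>\<nu> w) = 1))"

definition A1 :: "(real \<Rightarrow> real measure) \<Rightarrow> real set \<Rightarrow> bool" where
  "A1 \<nu> \<Theta> \<longleftrightarrow> interior \<Theta> \<noteq> {} \<and> (\<forall>w>0. \<not> (\<exists>c. AE y in \<nu> w. y = c))"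

definition st_le :: "real measure \<Rightarrow> real measure \<Rightarrow> bool" where
  "st_le P Q \<longleftrightarrow> (\<forall>x. measure P {..x} \<ge> measure Q {..x})"

end

(* The weighted mean Z is the sum of the independent variables (v_i / V) Y_i, so its law is a
   convolution of rescaled EDF laws. The family EDF(theta, v, phi) is stochastically increasing in
   theta (monotone likelihood ratio), and positive rescaling and convolution preserve the usual
   stochastic order; hence replacing every theta_i by theta_j (by theta_k) makes the law of Z
   stochastically smaller (larger). With a common parameter theta, the Laplace transform of Z is
   exp ((V / phi) (kappa (theta + s phi / V) - kappa theta)), finite for small |s| because theta is
   interior to Theta; this is the Laplace transform of EDF(theta, V, phi), and a law on the reals
   is determined by its Laplace transform near 0. *)

theory Submission
  imports Defs "HOL-Complex_Analysis.Cauchy_Integral_Formula"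
begin

section \<open>Laws determined by their Laplace transform near zero\<close>

lemma sum_power_divide_fact_le_exp:
  fixes x :: real
  assumes "0 \<le> x" and "finite A"
  shows "(\<Sum>n\<in>A. x ^ n / fact n) \<le> exp x"
proof -
  have "(\<lambda>n. x ^ n / fact n) sums exp x"
    using exp_converges[of x] by (simp add: divide_inverse_commute)
  then show ?thesis
    using assms sum_le_suminf[of "\<lambda>n. x ^ n / fact n" A] by (simp add: sums_iff)
qed

lemma norm_sum_power_divide_fact_le_exp:
  fixes z :: complex
  shows "norm (\<Sum>n<N. z ^ n / fact n) \<le> exp (norm z)"
proof -
  have "norm (\<Sum>n<N. z ^ n / fact n) \<le> (\<Sum>n<N. norm z ^ n / fact n)"
    by (rule order_trans[OF norm_sum]) (simp add: norm_divide norm_power)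
  also have "\<dots> \<le> exp (norm z)"
    by (rule sum_power_divide_fact_le_exp) auto
  finally show ?thesis .
qed

lemma integrable_abs_power_mult_exp:
  fixes M :: "real measure"
  assumes sets: "sets M = sets borel"
    and Laplace: "\<And>s. \<bar>s\<bar> < \<delta> \<Longrightarrow> integrable M (\<lambda>x. exp (s * x))"
    and c: "0 \<le> c" "c < \<delta>"
  shows "integrable M (\<lambda>x. \<bar>x\<bar> ^ n * exp (c * \<bar>x\<bar>))"
proof -
  define d where "d = (c + \<delta>) / 2"
  define e where "e = d - c"
  have e: "e > 0" and d: "\<bar>d\<bar> < \<delta>" "\<bar>-d\<bar> < \<delta>" using c by (auto simp: d_def e_def)
  show ?thesis
  proof (rule Bochner_Integration.integrable_bound)
    show "integrable M (\<lambda>x. fact n / e ^ n * (exp (d * x) + exp ((-d) * x)))"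
      using Laplace[OF d(1)] Laplace[OF d(2)] by auto
    show "(\<lambda>x. \<bar>x\<bar> ^ n * exp (c * \<bar>x\<bar>)) \<in> borel_measurable M"
      by (simp add: measurable_cong_sets[OF sets refl])
    show "AE x in M. norm (\<bar>x\<bar> ^ n * exp (c * \<bar>x\<bar>))
        \<le> norm (fact n / e ^ n * (exp (d * x) + exp ((-d) * x)))"
    proof (intro AE_I2)
      fix x :: real
      have "(e * \<bar>x\<bar>) ^ n / fact n \<le> exp (e * \<bar>x\<bar>)"
        using e sum_power_divide_fact_le_exp[of "e * \<bar>x\<bar>" "{n}"] by simp
      then have "\<bar>x\<bar> ^ n \<le> fact n / e ^ n * exp (e * \<bar>x\<bar>)"
        using e by (simp add: field_simps power_mult_distrib)
      then have "\<bar>x\<bar> ^ n * exp (c * \<bar>x\<bar>) \<le> fact n / e ^ n * exp (e * \<bar>x\<bar>) * exp (c * \<bar>x\<bar>)"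
        by (intro mult_right_mono) auto
      also have "\<dots> = fact n / e ^ n * exp (d * \<bar>x\<bar>)"
        by (simp add: e_def mult.assoc exp_add[symmetric] algebra_simps)
      also have "\<dots> \<le> fact n / e ^ n * (exp (d * x) + exp ((-d) * x))"
        using e by (intro mult_left_mono) (auto simp: abs_if)
      finally show "norm (\<bar>x\<bar> ^ n * exp (c * \<bar>x\<bar>))
        \<le> norm (fact n / e ^ n * (exp (d * x) + exp ((-d) * x)))"
        using e by simp
    qed
  qed
qed

text \<open>The \<open>n\<close>-th derivative of the complex Laplace transform \<open>z \<mapsto> \<integral> exp (z x) dM\<close>.\<close>

definition exp_moment :: "real measure \<Rightarrow> nat \<Rightarrow> complex \<Rightarrow> complex" where
  "exp_moment M n z = (CLINT x|M. of_real x ^ n * exp (z * of_real x))"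

lemma exp_moment_Taylor:
  fixes M :: "real measure" and h :: complex
  assumes sets: "sets M = sets borel"
    and Laplace: "\<And>s. \<bar>s\<bar> < \<delta> \<Longrightarrow> integrable M (\<lambda>x. exp (s * x))"
    and h: "norm h < \<delta>"
  shows "(\<lambda>m. h ^ m / fact m * exp_moment M (n + m) (\<i> * of_real u))
           sums exp_moment M n (\<i> * of_real u + h)"
proof -
  define g where "g x = complex_of_real x ^ n * exp (\<i> * of_real u * of_real x)" for x
  define S where "S N x = g x * (\<Sum>m<N. (h * of_real x) ^ m / fact m)" for N x
  have integrable_moment: "integrable M (\<lambda>x. complex_of_real x ^ k * exp (\<i> * of_real u * of_real x))"
    for k
  proof (rule Bochner_Integration.integrable_bound)
    show "integrable M (\<lambda>x. \<bar>x\<bar> ^ k * exp (0 * \<bar>x\<bar>))"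
      by (rule integrable_abs_power_mult_exp[where \<delta>=\<delta>, OF sets Laplace]) (use h norm_ge_zero[of h] in linarith)+
    show "AE x in M. norm (complex_of_real x ^ k * exp (\<i> * of_real u * of_real x))
        \<le> norm (\<bar>x\<bar> ^ k * exp (0 * \<bar>x\<bar>))"
      by (simp add: norm_power norm_mult)
  qed (simp add: measurable_cong_sets[OF sets refl])
  have S_eq: "S N x = (\<Sum>m<N. h ^ m / fact m * (complex_of_real x ^ (n + m) * exp (\<i> * of_real u * of_real x)))"
    for N x
    by (simp add: S_def g_def sum_distrib_left power_add power_mult_distrib algebra_simps)
  have "(\<lambda>N. integral\<^sup>L M (S N)) \<longlonglongrightarrow> integral\<^sup>L M (\<lambda>x. g x * exp (h * of_real x))"
  proof (rule integral_dominated_convergence[where w="\<lambda>x. \<bar>x\<bar> ^ n * exp (norm h * \<bar>x\<bar>)"])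
    show "integrable M (\<lambda>x. \<bar>x\<bar> ^ n * exp (norm h * \<bar>x\<bar>))"
      by (rule integrable_abs_power_mult_exp[where \<delta>=\<delta>, OF sets Laplace]) (use h in auto)
    show "AE x in M. (\<lambda>N. S N x) \<longlonglongrightarrow> g x * exp (h * complex_of_real x)"
    proof (intro AE_I2)
      fix x
      have "(\<lambda>m. (h * of_real x) ^ m / fact m) sums exp (h * of_real x)"
        using exp_converges[of "h * of_real x"] by (simp add: scaleR_conv_of_real divide_inverse ac_simps)
      then show "(\<lambda>N. S N x) \<longlonglongrightarrow> g x * exp (h * complex_of_real x)"
        unfolding S_def sums_def by (rule tendsto_mult_left)
    qed
    show "AE x in M. norm (S N x) \<le> \<bar>x\<bar> ^ n * exp (norm h * \<bar>x\<bar>)" for N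
    proof (intro AE_I2)
      fix x
      show "norm (S N x) \<le> \<bar>x\<bar> ^ n * exp (norm h * \<bar>x\<bar>)"
        using norm_sum_power_divide_fact_le_exp[where z="h * of_real x" and N=N]
        by (auto simp: S_def g_def norm_mult norm_power intro!: mult_left_mono)
    qed
  qed (simp_all add: S_def[abs_def] g_def[abs_def] measurable_cong_sets[OF sets refl])
  moreover have "integral\<^sup>L M (S N) = (\<Sum>m<N. h ^ m / fact m * exp_moment M (n + m) (\<i> * of_real u))" for N
    unfolding S_eq exp_moment_def using integrable_moment by (simp add: integral_sum mult.assoc)
  moreover have "integral\<^sup>L M (\<lambda>x. g x * exp (h * of_real x)) = exp_moment M n (\<i> * of_real u + h)"
    by (simp add: exp_moment_def g_def distrib_right exp_add mult.assoc)
  ultimately show ?thesis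
    by (simp add: sums_def)
qed

lemma exp_moment_0_of_real:
  "exp_moment M 0 (of_real t) = of_real (\<integral>x. exp (t * x) \<partial>M)"
  by (simp add: exp_moment_def exp_of_real[symmetric] integral_complex_of_real[symmetric] del: exp_of_real)

lemma powser_eq_0_if_vanishes_on_reals:
  fixes c :: "nat \<Rightarrow> complex"
  assumes "0 < r"
    and sums: "\<And>z. norm z < r \<Longrightarrow> (\<lambda>n. c n * z ^ n) sums f z"
    and vanish: "\<And>t. \<bar>t\<bar> < r \<Longrightarrow> f (of_real t) = 0"
  shows "c n = 0"
proof (rule ccontr)
  assume "c n \<noteq> 0"
  have "f 0 = 0"
    using vanish[of 0] \<open>0 < r\<close> by simp
  moreover have "(\<lambda>n. c n * 0 ^ n) sums c 0"
    by (rule powser_sums_zero)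
  ultimately have "c 0 = 0"
    using sums[of 0] \<open>0 < r\<close> sums_unique2 by fastforce
  with \<open>c n \<noteq> 0\<close> have "n > 0"
    by (cases n) auto
  obtain s where "0 < s" and nonzero: "\<And>z. z \<in> cball 0 s - {0} \<Longrightarrow> f z \<noteq> 0"
    using powser_0_nonzero[of r 0 c f n] \<open>0 < r\<close> sums \<open>f 0 = 0\<close> \<open>c n \<noteq> 0\<close> \<open>n > 0\<close> by auto
  define t where "t = min s (r / 2)"
  have "f (of_real t) \<noteq> 0"
    using \<open>0 < s\<close> \<open>0 < r\<close> by (intro nonzero) (auto simp: t_def)
  moreover have "f (of_real t) = 0"
    using \<open>0 < s\<close> \<open>0 < r\<close> by (intro vanish) (auto simp: t_def)
  ultimately show False
    by contradiction
qed

text \<open>Analytic continuation along the imaginary axis in steps of length \<open>\<delta>/2\<close>: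
  once all derivatives \<open>D n\<close> vanish at a point, the Taylor expansions make them vanish on the
  whole disc of radius \<open>\<delta>\<close> around it.\<close>

lemma Taylor_family_vanishes_on_imaginary_axis:
  fixes D :: "nat \<Rightarrow> complex \<Rightarrow> complex"
  assumes "0 < \<delta>"
    and Taylor: "\<And>h n u. norm h < \<delta> \<Longrightarrow>
      (\<lambda>m. h ^ m / fact m * D (n + m) (\<i> * of_real u)) sums D n (\<i> * of_real u + h)"
    and vanish: "\<And>t. \<bar>t\<bar> < \<delta> \<Longrightarrow> D 0 (of_real t) = 0"
  shows "D n (\<i> * of_real u) = 0"
proof -
  have step: "D n (\<i> * of_real u) = 0"
    if "\<And>m. D m (\<i> * of_real u0) = 0" and "\<bar>u - u0\<bar> < \<delta>" for n u u0
  proof -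
    have "norm (\<i> * complex_of_real (u - u0)) < \<delta>"
      using that(2) by (simp add: norm_mult del: of_real_diff)
    from Taylor[OF this, of n u0] that(1) have "(\<lambda>m. 0) sums D n (\<i> * of_real u)"
      by (simp add: algebra_simps)
    then show ?thesis
      by (simp add: sums_iff)
  qed
  have at_0: "D m 0 = 0" for m
  proof -
    have sums: "(\<lambda>m. D m 0 / fact m * z ^ m) sums D 0 z" if "norm z < \<delta>" for z
      using Taylor[OF that, of 0 0] by (simp add: ac_simps)
    have "D m 0 / fact m = 0"
      using powser_eq_0_if_vanishes_on_reals[OF \<open>0 < \<delta>\<close> sums vanish] .
    then show ?thesis
      by simp
  qed
  have "\<forall>n u. \<bar>u\<bar> \<le> real K * (\<delta> / 2) \<longrightarrow> D n (\<i> * of_real u) = 0" for K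
  proof (induction K)
    case 0
    then show ?case
      using at_0 by simp
  next
    case (Suc K)
    show ?case
    proof (intro allI impI)
      fix n u
      assume u: "\<bar>u\<bar> \<le> real (Suc K) * (\<delta> / 2)"
      define u0 where "u0 = u * real K / real (Suc K)"
      have "\<bar>u0\<bar> \<le> real K * (\<delta> / 2)"
        using mult_right_mono[OF u, of "real K"] by (simp add: u0_def abs_mult field_simps)
      then have u0_vanish: "D m (\<i> * of_real u0) = 0" for m
        using Suc.IH by blast
      have "\<bar>u - u0\<bar> \<le> \<delta> / 2"
        using u by (simp add: u0_def abs_divide field_simps)
      with \<open>0 < \<delta>\<close> have "\<bar>u - u0\<bar> < \<delta>"
        by linarith
      then show "D n (\<i> * of_real u) = 0"
        by (rule step[OF u0_vanish])
    qed
  qed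
  moreover obtain K :: nat where "\<bar>u\<bar> / (\<delta> / 2) \<le> real K"
    using real_arch_simple by blast
  ultimately show ?thesis
    using \<open>0 < \<delta>\<close> by (simp add: field_simps)
qed

text \<open>The Taylor expansions of the complex Laplace transform carry the agreement on
  \<open>]-\<delta>, \<delta>[\<close> over to the imaginary axis, i.e. to the characteristic functions.\<close>

lemma Laplace_uniqueness:
  fixes M1 M2 :: "real measure"
  assumes "real_distribution M1" and "real_distribution M2" and "0 < \<delta>"
    and Laplace1: "\<And>s. \<bar>s\<bar> < \<delta> \<Longrightarrow> (\<integral>\<^sup>+x. ennreal (exp (s * x)) \<partial>M1) = ennreal (L s)"
    and Laplace2: "\<And>s. \<bar>s\<bar> < \<delta> \<Longrightarrow> (\<integral>\<^sup>+x. ennreal (exp (s * x)) \<partial>M2) = ennreal (L s)"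
  shows "M1 = M2"
proof -
  have sets: "sets M1 = sets borel" "sets M2 = sets borel"
    using assms(1,2) by (simp_all add: real_distribution_def real_distribution_axioms_def)
  have integrable1: "integrable M1 (\<lambda>x. exp (s * x))" if "\<bar>s\<bar> < \<delta>" for s
    using Laplace1[OF that] by (intro integrableI_nn_integral_finite) (auto simp: measurable_cong_sets[OF sets(1) refl])
  have integrable2: "integrable M2 (\<lambda>x. exp (s * x))" if "\<bar>s\<bar> < \<delta>" for s
    using Laplace2[OF that] by (intro integrableI_nn_integral_finite) (auto simp: measurable_cong_sets[OF sets(2) refl])
  have same_Laplace: "(\<integral>x. exp (s * x) \<partial>M1) = (\<integral>x. exp (s * x) \<partial>M2)" if "\<bar>s\<bar> < \<delta>" for s
    using Laplace1[OF that] Laplace2[OF that]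
    by (simp add: integral_eq_nn_integral measurable_cong_sets[OF sets(1) refl] measurable_cong_sets[OF sets(2) refl])
  define D where "D n z = exp_moment M1 n z - exp_moment M2 n z" for n z
  have "D 0 (\<i> * of_real t) = 0" for t
  proof (rule Taylor_family_vanishes_on_imaginary_axis[OF \<open>0 < \<delta>\<close>])
    show "(\<lambda>m. h ^ m / fact m * D (n + m) (\<i> * of_real u)) sums D n (\<i> * of_real u + h)"
      if "norm h < \<delta>" for h n u
      using sums_diff[OF exp_moment_Taylor[OF sets(1) integrable1 that] exp_moment_Taylor[OF sets(2) integrable2 that]]
      by (simp add: D_def right_diff_distrib)
    show "D 0 (of_real t) = 0" if "\<bar>t\<bar> < \<delta>" for t
      using same_Laplace[OF that] by (simp add: D_def exp_moment_0_of_real)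
  qed
  then have "char M1 = char M2"
    by (auto simp: D_def exp_moment_def char_def mult.assoc)
  then show ?thesis
    by (rule Levy_uniqueness[OF assms(1,2)])
qed

section \<open>The usual stochastic order\<close>

lemma st_le_trans: "st_le P Q \<Longrightarrow> st_le Q R \<Longrightarrow> st_le P R"
  unfolding st_le_def by (meson order_trans)

lemma emeasure_density_mono_on:
  assumes "A \<in> sets N" "f \<in> borel_measurable N" "g \<in> borel_measurable N"
    and "\<And>y. y \<in> A \<Longrightarrow> f y \<le> g y"
  shows "emeasure (density N f) A \<le> emeasure (density N g) A"
  using assms by (auto simp: emeasure_density intro!: nn_integral_mono split: split_indicator)

lemma emeasure_density_cmult:
  assumes "A \<in> sets N" "f \<in> borel_measurable N"
  shows "emeasure (density N (\<lambda>y. c * f y)) A = c * emeasure (density N f) A"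
  using assms by (simp add: emeasure_density nn_integral_cmult[symmetric] mult.assoc)

lemma st_le_density_mono_ratio:
  fixes f g :: "real \<Rightarrow> real"
  assumes sets: "sets N = sets borel"
    and f: "f \<in> borel_measurable borel" "\<And>y. 0 \<le> f y"
    and g: "mono g" "\<And>y. 0 \<le> g y"
    and P: "prob_space (density N f)"
    and P': "prob_space (density N (\<lambda>y. f y * g y))"
  shows "st_le (density N f) (density N (\<lambda>y. f y * g y))"
  unfolding st_le_def
proof
  fix x :: real
  let ?P = "density N f" and ?P' = "density N (\<lambda>y. f y * g y)"
  define p q where "p = measure ?P {..x}" and "q = measure ?P' {..x}"
  interpret P: prob_space ?P by (rule P)
  interpret P': prob_space ?P' by (rule P')
  have meas: "(\<lambda>y. ennreal (f y * g y)) \<in> borel_measurable N"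
    "(\<lambda>y. ennreal (g x) * ennreal (f y)) \<in> borel_measurable N" "(\<lambda>y. ennreal (f y)) \<in> borel_measurable N"
    using f borel_measurable_mono[OF g(1)] by (simp_all add: measurable_cong_sets[OF sets refl])
  have "ennreal (f y * g y) \<le> ennreal (g x) * ennreal (f y)" if "y \<le> x" for y
    using f(2)[of y] g(2)[of x] monoD[OF g(1) that] by (simp add: ennreal_mult'[symmetric] mult.commute mult_left_mono)
  then have below: "emeasure ?P' {..x} \<le> ennreal (g x) * emeasure ?P {..x}"
    using emeasure_density_mono_on[OF _ meas(1,2), of "{..x}"] emeasure_density_cmult[OF _ meas(3), of "{..x}"] sets
    by simp
  have "ennreal (g x) * ennreal (f y) \<le> ennreal (f y * g y)" if "x < y" for y
    using f(2)[of y] g(2)[of x] monoD[OF g(1), of x y] that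
    by (simp add: ennreal_mult'[symmetric] mult.commute mult_left_mono)
  then have above: "ennreal (g x) * emeasure ?P {x<..} \<le> emeasure ?P' {x<..}"
    using emeasure_density_mono_on[OF _ meas(2,1), of "{x<..}"] emeasure_density_cmult[OF _ meas(3), of "{x<..}"] sets
    by simp
  have "{x<..} = space ?P - {..x}" "{x<..} = space ?P' - {..x}"
    using sets_eq_imp_space_eq[OF sets] by auto
  then have "measure ?P {x<..} = 1 - p" "measure ?P' {x<..} = 1 - q"
    using P.prob_compl[of "{..x}"] P'.prob_compl[of "{..x}"] sets by (simp_all add: p_def q_def)
  then have "q \<le> g x * p" "g x * (1 - p) \<le> 1 - q"
    using below above g(2)[of x] P.prob_le_1[of "{..x}"]
    by (simp_all add: p_def q_def P.emeasure_eq_measure P'.emeasure_eq_measure ennreal_mult'[symmetric])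
  moreover have "0 \<le> p" "p \<le> 1"
    by (simp_all add: p_def)
  ultimately show "q \<le> p"
    using g(2)[of x] mult_left_le_one_le[of p "g x"] mult_right_mono[of 1 "g x" "1 - p"]
    by (cases "g x \<le> 1") auto
qed

lemma st_le_distr_mult:
  assumes "sets P = sets borel" "sets Q = sets borel" and "0 < c" and "st_le P Q"
  shows "st_le (distr P borel (\<lambda>y. c * y)) (distr Q borel (\<lambda>y. c * y))"
proof -
  have "measure (distr R borel (\<lambda>y. c * y)) {..x} = measure R {..x / c}" if "sets R = sets borel" for R x
  proof -
    have "(\<lambda>y. c * y) -` {..x} \<inter> space R = {..x / c}"
      using \<open>0 < c\<close> sets_eq_imp_space_eq[OF that] by (auto simp: field_simps)
    then show ?thesis
      by (subst measure_distr) (auto simp: measurable_cong_sets[OF that refl])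
  qed
  then show ?thesis
    using assms by (simp add: st_le_def)
qed

lemma real_distribution_convolution:
  assumes "real_distribution P" "real_distribution Q"
  shows "real_distribution (P \<star> Q)"
proof -
  interpret P: real_distribution P by fact
  interpret Q: real_distribution Q by fact
  interpret PQ: prob_space "P \<Otimes>\<^sub>M Q"
    by (intro prob_space_pair P.prob_space_axioms Q.prob_space_axioms)
  show ?thesis
    unfolding convolution_def
    by (rule PQ.real_distribution_distr)
      (simp add: measurable_cong_sets[OF sets_pair_measure_cong[OF P.events_eq_borel Q.events_eq_borel] refl])
qed

lemma st_le_convolution_right:
  assumes P: "real_distribution P" and Q: "real_distribution Q" and Q': "real_distribution Q'"
    and "st_le Q Q'"
  shows "st_le (P \<star> Q) (P \<star> Q')"
  unfolding st_le_def
proof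
  fix x :: real
  interpret P: real_distribution P by fact
  interpret Q: real_distribution Q by fact
  interpret Q': real_distribution Q' by fact
  interpret PQ: real_distribution "P \<star> Q" by (rule real_distribution_convolution[OF P Q])
  interpret PQ': real_distribution "P \<star> Q'" by (rule real_distribution_convolution[OF P Q'])
  have shift: "{z. z + y \<le> x} = {..x - y}" for y :: real
    by auto
  have "emeasure (P \<star> Q') {..x} = (\<integral>\<^sup>+y. emeasure Q' {..x - y} \<partial>P)"
    by (subst convolution_emeasure) (auto simp: shift P.finite_measure_axioms Q'.finite_measure_axioms)
  also have "\<dots> \<le> (\<integral>\<^sup>+y. emeasure Q {..x - y} \<partial>P)"
    using \<open>st_le Q Q'\<close> by (intro nn_integral_mono) (simp add: st_le_def Q.emeasure_eq_measure Q'.emeasure_eq_measure)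
  also have "\<dots> = emeasure (P \<star> Q) {..x}"
    by (subst convolution_emeasure) (auto simp: shift P.finite_measure_axioms Q.finite_measure_axioms)
  finally show "measure (P \<star> Q') {..x} \<le> measure (P \<star> Q) {..x}"
    by (simp add: PQ.emeasure_eq_measure PQ'.emeasure_eq_measure)
qed

lemma st_le_convolution_left:
  assumes "real_distribution P" "real_distribution P'" "real_distribution Q" and "st_le P P'"
  shows "st_le (P \<star> Q) (P' \<star> Q)"
proof -
  interpret P: real_distribution P by fact
  interpret P': real_distribution P' by fact
  interpret Q: real_distribution Q by fact
  have "(P \<star> Q) = (Q \<star> P)" "(P' \<star> Q) = (Q \<star> P')"
    by (simp_all add: convolution_commutative P.finite_measure_axioms P'.finite_measure_axioms Q.finite_measure_axioms)
  then show ?thesis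
    using st_le_convolution_right[OF assms(3,1,2,4)] by simp
qed

section \<open>Laws of finite sums of independent variables\<close>

definition sum_law :: "('i \<Rightarrow> real measure) \<Rightarrow> 'i set \<Rightarrow> real measure" where
  "sum_law Q I = distr (PiM I Q) borel (\<lambda>\<omega>. \<Sum>i\<in>I. \<omega> i)"

lemma sum_law_cong: "(\<And>i. i \<in> I \<Longrightarrow> Q i = R i) \<Longrightarrow> sum_law Q I = sum_law R I"
  unfolding sum_law_def by (metis PiM_cong)

lemma sets_PiM_real_distribution:
  assumes "\<And>i. i \<in> I \<Longrightarrow> real_distribution (Q i)"
  shows "sets (PiM I Q) = sets (PiM I (\<lambda>_. borel :: real measure))"
  using assms by (intro sets_PiM_cong) (simp_all add: real_distribution.events_eq_borel)

lemma prob_space_PiM_real_distribution: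
  assumes "\<And>i. i \<in> I \<Longrightarrow> real_distribution (Q i)"
  shows "prob_space (PiM I Q)"
  using assms by (intro prob_space_PiM) (simp add: real_distribution_def)

lemma measurable_PiM_coordinate_real_distribution:
  assumes "\<And>i. i \<in> I \<Longrightarrow> real_distribution (Q i)" and "i \<in> I"
  shows "(\<lambda>\<omega>. \<omega> i) \<in> borel_measurable (PiM I Q)"
proof -
  have "(\<lambda>\<omega>. \<omega> i) \<in> PiM I Q \<rightarrow>\<^sub>M Q i"
    using assms(2) by (rule measurable_component_singleton)
  also have "PiM I Q \<rightarrow>\<^sub>M Q i = borel_measurable (PiM I Q)"
    using assms by (intro measurable_cong_sets) (simp_all add: real_distribution.events_eq_borel)
  finally show ?thesis .
qed

lemma real_distribution_sum_law:
  assumes "\<And>i. i \<in> I \<Longrightarrow> real_distribution (Q i)"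
  shows "real_distribution (sum_law Q I)"
proof -
  interpret P: prob_space "PiM I Q"
    using assms by (rule prob_space_PiM_real_distribution)
  show ?thesis
    unfolding sum_law_def
    by (intro P.real_distribution_distr borel_measurable_sum measurable_PiM_coordinate_real_distribution[OF assms])
qed

lemma sum_law_empty: "sum_law Q {} = return borel 0"
proof -
  interpret P: prob_space "PiM {} Q"
    by (rule prob_space_PiM) simp
  show ?thesis
    by (simp add: sum_law_def)
qed

lemma distr_PiM_component_real_distribution:
  assumes "\<And>i. i \<in> I \<Longrightarrow> real_distribution (Q i)" and "i \<in> I"
  shows "distr (PiM I Q) borel (\<lambda>\<omega>. \<omega> i) = Q i"
proof -
  have "distr (PiM I Q) borel (\<lambda>\<omega>. \<omega> i) = distr (PiM I Q) (Q i) (\<lambda>\<omega>. \<omega> i)"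
    using assms by (intro distr_cong) (simp_all add: real_distribution.events_eq_borel)
  also have "\<dots> = Q i"
    using assms by (intro distr_PiM_component) (simp_all add: real_distribution_def)
  finally show ?thesis .
qed

lemma indep_vars_PiM_coordinates:
  assumes Q: "\<And>i. i \<in> I \<Longrightarrow> real_distribution (Q i)"
  shows "prob_space.indep_vars (PiM I Q) (\<lambda>_. borel) (\<lambda>i \<omega>. \<omega> i) I"
proof -
  interpret P: prob_space "PiM I Q"
    using Q by (rule prob_space_PiM_real_distribution)
  have coordinate: "P.random_variable borel (\<lambda>\<omega>. \<omega> i)" if "i \<in> I" for i
    using Q that by (rule measurable_PiM_coordinate_real_distribution)
  show ?thesis
  proof (cases "I = {}")
    case True
    show ?thesis
      unfolding P.indep_vars_def P.indep_sets_def using True by simp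
  next
    case False
    have "distr (PiM I Q) (PiM I (\<lambda>_. borel)) (\<lambda>\<omega>. \<lambda>i\<in>I. \<omega> i) = distr (PiM I Q) (PiM I Q) (\<lambda>\<omega>. \<omega>)"
      using sets_PiM_real_distribution[where Q = Q, OF Q] by (intro distr_cong) (auto simp: space_PiM)
    also have "\<dots> = PiM I (\<lambda>i. distr (PiM I Q) borel (\<lambda>\<omega>. \<omega> i))"
      using Q by (auto simp: distr_PiM_component_real_distribution intro!: PiM_cong)
    finally show ?thesis
      using P.indep_vars_iff_distr_eq_PiM'[OF False coordinate] by simp
  qed
qed

lemma (in prob_space) distr_sum_indep_vars:
  fixes X :: "'i \<Rightarrow> 'a \<Rightarrow> real"
  assumes indep: "indep_vars (\<lambda>_. borel) X I"
  shows "distr M borel (\<lambda>\<omega>. \<Sum>i\<in>I. X i \<omega>) = sum_law (\<lambda>i. distr M borel (X i)) I"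
proof (cases "I = {}")
  case True
  then show ?thesis
    by (simp add: sum_law_empty)
next
  case False
  have X: "random_variable borel (X i)" if "i \<in> I" for i
    using indep that by (auto simp: indep_vars_def2)
  have "distr M borel (\<lambda>\<omega>. \<Sum>i\<in>I. X i \<omega>)
      = distr (distr M (PiM I (\<lambda>_. borel)) (\<lambda>\<omega>. \<lambda>i\<in>I. X i \<omega>)) borel (\<lambda>x. \<Sum>i\<in>I. x i)"
    using X by (subst distr_distr) (auto intro!: distr_cong measurable_restrict borel_measurable_sum
        measurable_component_singleton)
  also have "distr M (PiM I (\<lambda>_. borel)) (\<lambda>\<omega>. \<lambda>i\<in>I. X i \<omega>) = PiM I (\<lambda>i. distr M borel (X i))"
    using indep indep_vars_iff_distr_eq_PiM'[OF False X] by simp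
  finally show ?thesis
    by (simp add: sum_law_def)
qed

lemma (in prob_space) distr_weighted_sum_indep_vars:
  fixes X :: "'i \<Rightarrow> 'a \<Rightarrow> real"
  assumes indep: "indep_vars (\<lambda>_. borel) X I"
  shows "distr M borel (\<lambda>\<omega>. \<Sum>i\<in>I. c i * X i \<omega>)
           = sum_law (\<lambda>i. distr (distr M borel (X i)) borel (\<lambda>y. c i * y)) I"
proof -
  have "indep_vars (\<lambda>_. borel) (\<lambda>i \<omega>. c i * X i \<omega>) I"
    using indep_vars_compose2[OF indep, of "\<lambda>i y. c i * y" "\<lambda>_. borel"] by simp
  then have "distr M borel (\<lambda>\<omega>. \<Sum>i\<in>I. c i * X i \<omega>) = sum_law (\<lambda>i. distr M borel (\<lambda>\<omega>. c i * X i \<omega>)) I"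
    by (rule distr_sum_indep_vars)
  also have "\<dots> = sum_law (\<lambda>i. distr (distr M borel (X i)) borel (\<lambda>y. c i * y)) I"
    using indep by (intro sum_law_cong) (auto simp: distr_distr indep_vars_def2 comp_def)
  finally show ?thesis .
qed

lemma sum_law_insert:
  assumes Q: "\<And>l. l \<in> insert i J \<Longrightarrow> real_distribution (Q l)" and "finite J" "i \<notin> J"
  shows "sum_law Q (insert i J) = (Q i \<star> sum_law Q J)"
proof -
  let ?P = "PiM (insert i J) Q"
  interpret P: prob_space ?P
    using Q by (rule prob_space_PiM_real_distribution)
  have indep: "P.indep_vars (\<lambda>_. borel) (\<lambda>l \<omega>. \<omega> l) (insert i J)"
    using Q by (rule indep_vars_PiM_coordinates)
  have coordinate: "P.random_variable borel (\<lambda>\<omega>. \<omega> l)" if "l \<in> insert i J" for l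
    using indep that by (auto simp: P.indep_vars_def2)
  have "sum_law Q (insert i J) = distr ?P borel (\<lambda>\<omega>. \<omega> i + (\<Sum>l\<in>J. \<omega> l))"
    using assms by (simp add: sum_law_def)
  also have "\<dots> = (distr ?P borel (\<lambda>\<omega>. \<omega> i) \<star> distr ?P borel (\<lambda>\<omega>. \<Sum>l\<in>J. \<omega> l))"
    using P.indep_vars_sum[OF \<open>finite J\<close> \<open>i \<notin> J\<close> indep] coordinate
    by (intro P.sum_indep_random_variable) auto
  also have "distr ?P borel (\<lambda>\<omega>. \<Sum>l\<in>J. \<omega> l) = sum_law (\<lambda>l. distr ?P borel (\<lambda>\<omega>. \<omega> l)) J"
    using P.indep_vars_subset[OF indep, of J] by (intro P.distr_sum_indep_vars) auto
  also have "\<dots> = sum_law Q J"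
    using Q by (intro sum_law_cong distr_PiM_component_real_distribution) auto
  finally show ?thesis
    using distr_PiM_component_real_distribution[where Q = Q, OF Q insertI1] by simp
qed

lemma nn_integral_exp_sum_law:
  assumes "finite I" and "\<And>i. i \<in> I \<Longrightarrow> real_distribution (Q i)"
  shows "(\<integral>\<^sup>+x. ennreal (exp (s * x)) \<partial>sum_law Q I) = (\<Prod>i\<in>I. \<integral>\<^sup>+x. ennreal (exp (s * x)) \<partial>Q i)"
  using assms
proof (induction I rule: finite_induct)
  case empty
  then show ?case
    by (simp add: sum_law_empty nn_integral_return)
next
  case (insert i J)
  interpret Qi: real_distribution "Q i"
    using insert.prems by simp
  interpret S: real_distribution "sum_law Q J"
    using insert.prems by (intro real_distribution_sum_law) simp
  have "sum_law Q (insert i J) = (Q i \<star> sum_law Q J)"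
    using insert.prems insert.hyps by (rule sum_law_insert)
  then have "(\<integral>\<^sup>+x. ennreal (exp (s * x)) \<partial>sum_law Q (insert i J))
      = (\<integral>\<^sup>+x. \<integral>\<^sup>+y. ennreal (exp (s * (x + y))) \<partial>sum_law Q J \<partial>Q i)"
    using nn_integral_convolution[where f = "\<lambda>x. ennreal (exp (s * x))"]
    by (simp add: Qi.finite_measure_axioms S.finite_measure_axioms)
  also have "\<dots> = (\<integral>\<^sup>+x. \<integral>\<^sup>+y. ennreal (exp (s * x)) * ennreal (exp (s * y)) \<partial>sum_law Q J \<partial>Q i)"
    by (simp add: distrib_left exp_add ennreal_mult)
  also have "\<dots> = (\<integral>\<^sup>+x. ennreal (exp (s * x)) \<partial>Q i) * (\<integral>\<^sup>+y. ennreal (exp (s * y)) \<partial>sum_law Q J)"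
    by (simp add: nn_integral_cmult nn_integral_multc)
  finally show ?case
    using insert by simp
qed

lemma st_le_sum_law:
  assumes "finite I"
    and "\<And>i. i \<in> I \<Longrightarrow> real_distribution (Q i)" "\<And>i. i \<in> I \<Longrightarrow> real_distribution (R i)"
    and "\<And>i. i \<in> I \<Longrightarrow> st_le (Q i) (R i)"
  shows "st_le (sum_law Q I) (sum_law R I)"
  using assms
proof (induction I rule: finite_induct)
  case empty
  then show ?case
    by (simp add: sum_law_empty st_le_def)
next
  case (insert i J)
  have "st_le (Q i \<star> sum_law Q J) (R i \<star> sum_law Q J)"
    using insert.prems by (intro st_le_convolution_left real_distribution_sum_law) auto
  moreover have "st_le (R i \<star> sum_law Q J) (R i \<star> sum_law R J)"
    using insert by (intro st_le_convolution_right real_distribution_sum_law) auto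
  moreover have "sum_law Q (insert i J) = (Q i \<star> sum_law Q J)"
    using insert.prems(1) insert.hyps by (rule sum_law_insert)
  moreover have "sum_law R (insert i J) = (R i \<star> sum_law R J)"
    using insert.prems(2) insert.hyps by (rule sum_law_insert)
  ultimately show ?case
    by (metis st_le_trans)
qed

section \<open>Exponential dispersion families\<close>

lemma cumulant_funD:
  assumes "cumulant_fun \<nu> a \<kappa> \<Theta>" and "0 < w"
  shows "sets (\<nu> w) = sets borel" and "(\<lambda>y. a y w) \<in> borel_measurable borel"
    and "\<theta> \<in> \<Theta> \<Longrightarrow> (\<integral>\<^sup>+y. ennreal (exp ((y * \<theta> - \<kappa> \<theta>) * w + a y w)) \<partial>\<nu> w) = 1"
  using assms unfolding cumulant_fun_def by auto

lemma EDF_eq_density: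
  "EDF \<nu> a \<kappa> \<theta> v \<phi> = density (\<nu> (v / \<phi>)) (\<lambda>y. ennreal (exp ((y * \<theta> - \<kappa> \<theta>) * (v / \<phi>) + a y (v / \<phi>))))"
  by (simp add: EDF_def)

lemma sets_EDF:
  assumes "cumulant_fun \<nu> a \<kappa> \<Theta>" and "0 < \<phi>" "0 < v"
  shows "sets (EDF \<nu> a \<kappa> \<theta> v \<phi>) = sets borel"
  using cumulant_funD(1)[OF assms(1), of "v / \<phi>"] assms(2,3) by (simp add: EDF_def)

lemma nn_integral_exp_EDF:
  assumes cf: "cumulant_fun \<nu> a \<kappa> \<Theta>" and "0 < \<phi>" "0 < v"
    and "\<theta> \<in> \<Theta>" "\<theta> + s * \<phi> / v \<in> \<Theta>"
  shows "(\<integral>\<^sup>+y. ennreal (exp (s * y)) \<partial>EDF \<nu> a \<kappa> \<theta> v \<phi>)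
           = ennreal (exp (v / \<phi> * (\<kappa> (\<theta> + s * \<phi> / v) - \<kappa> \<theta>)))"
proof -
  define w where "w = v / \<phi>"
  define \<theta>' where "\<theta>' = \<theta> + s * \<phi> / v"
  have "0 < w"
    using assms by (simp add: w_def)
  note sets = cumulant_funD(1)[OF cf \<open>0 < w\<close>] and a = cumulant_funD(2)[OF cf \<open>0 < w\<close>]
  have exponent: "(y * \<theta> - \<kappa> \<theta>) * w + a y w + s * y = w * (\<kappa> \<theta>' - \<kappa> \<theta>) + ((y * \<theta>' - \<kappa> \<theta>') * w + a y w)"
    for y
    using assms by (simp add: w_def \<theta>'_def field_simps)
  have "(\<integral>\<^sup>+y. ennreal (exp (s * y)) \<partial>EDF \<nu> a \<kappa> \<theta> v \<phi>)
      = (\<integral>\<^sup>+y. ennreal (exp ((y * \<theta> - \<kappa> \<theta>) * w + a y w)) * ennreal (exp (s * y)) \<partial>\<nu> w)"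
    unfolding EDF_eq_density w_def[symmetric] using a
    by (intro nn_integral_density) (simp_all add: measurable_cong_sets[OF sets refl])
  also have "\<dots> = (\<integral>\<^sup>+y. ennreal (exp (w * (\<kappa> \<theta>' - \<kappa> \<theta>)))
                      * ennreal (exp ((y * \<theta>' - \<kappa> \<theta>') * w + a y w)) \<partial>\<nu> w)"
    by (simp add: ennreal_mult'[symmetric] exp_add[symmetric] exponent)
  also have "\<dots> = ennreal (exp (w * (\<kappa> \<theta>' - \<kappa> \<theta>)))
                    * (\<integral>\<^sup>+y. ennreal (exp ((y * \<theta>' - \<kappa> \<theta>') * w + a y w)) \<partial>\<nu> w)"
    using a by (intro nn_integral_cmult) (simp add: measurable_cong_sets[OF sets refl])
  also have "\<dots> = ennreal (exp (w * (\<kappa> \<theta>' - \<kappa> \<theta>)))"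
    using cumulant_funD(3)[OF cf \<open>0 < w\<close>] assms(5) by (simp add: \<theta>'_def)
  finally show ?thesis
    by (simp add: w_def \<theta>'_def)
qed

lemma real_distribution_EDF:
  assumes "cumulant_fun \<nu> a \<kappa> \<Theta>" and "0 < \<phi>" "0 < v" and "\<theta> \<in> \<Theta>"
  shows "real_distribution (EDF \<nu> a \<kappa> \<theta> v \<phi>)"
proof -
  have "emeasure (EDF \<nu> a \<kappa> \<theta> v \<phi>) (space (EDF \<nu> a \<kappa> \<theta> v \<phi>)) = 1"
    using nn_integral_exp_EDF[OF assms(1-4), of 0] assms(4) by (simp add: nn_integral_const)
  then show ?thesis
    using sets_EDF[OF assms(1-3)] by (simp add: real_distribution_def real_distribution_axioms_def prob_spaceI)
qed

text \<open>The density ratio of \<open>EDF \<theta>'\<close> to \<open>EDF \<theta>\<close> is \<open>exp ((\<theta>' - \<theta>) y v / \<phi>)\<close> up to a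
  constant factor, increasing in \<open>y\<close> when \<open>\<theta> \<le> \<theta>'\<close>.\<close>

lemma st_le_EDF:
  assumes cf: "cumulant_fun \<nu> a \<kappa> \<Theta>" and "0 < \<phi>" "0 < v"
    and "\<theta> \<in> \<Theta>" "\<theta>' \<in> \<Theta>" "\<theta> \<le> \<theta>'"
  shows "st_le (EDF \<nu> a \<kappa> \<theta> v \<phi>) (EDF \<nu> a \<kappa> \<theta>' v \<phi>)"
proof -
  define w where "w = v / \<phi>"
  have "0 < w"
    using assms by (simp add: w_def)
  define f where "f y = exp ((y * \<theta> - \<kappa> \<theta>) * w + a y w)" for y
  define g where "g y = exp (w * (\<theta>' - \<theta>) * y - w * (\<kappa> \<theta>' - \<kappa> \<theta>))" for y
  have EDF_\<theta>: "EDF \<nu> a \<kappa> \<theta> v \<phi> = density (\<nu> w) (\<lambda>y. ennreal (f y))"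
    by (simp add: EDF_eq_density f_def w_def)
  have "f y * g y = exp ((y * \<theta>' - \<kappa> \<theta>') * w + a y w)" for y
    by (simp add: f_def g_def exp_add[symmetric] algebra_simps)
  then have EDF_\<theta>': "EDF \<nu> a \<kappa> \<theta>' v \<phi> = density (\<nu> w) (\<lambda>y. ennreal (f y * g y))"
    by (simp add: EDF_eq_density w_def)
  have "mono g"
    using \<open>0 < w\<close> \<open>\<theta> \<le> \<theta>'\<close> by (auto simp: g_def mono_def intro!: mult_left_mono)
  have "f \<in> borel_measurable borel"
    using cumulant_funD(2)[OF cf \<open>0 < w\<close>] by (simp add: f_def[abs_def])
  have "prob_space (density (\<nu> w) (\<lambda>y. ennreal (f y)))"
    and "prob_space (density (\<nu> w) (\<lambda>y. ennreal (f y * g y)))"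
    using real_distribution_EDF[OF assms(1-3) assms(4)] real_distribution_EDF[OF assms(1-3) assms(5)]
    unfolding EDF_\<theta> EDF_\<theta>' real_distribution_def by simp_all
  then show ?thesis
    unfolding EDF_\<theta> EDF_\<theta>'
    using st_le_density_mono_ratio[OF cumulant_funD(1)[OF cf \<open>0 < w\<close>] \<open>f \<in> borel_measurable borel\<close> _ \<open>mono g\<close>]
    by (simp add: f_def g_def)
qed

lemma st_le_scaled_EDF:
  assumes "cumulant_fun \<nu> a \<kappa> \<Theta>" and "0 < \<phi>" "0 < v" "0 < c"
    and "\<theta> \<in> \<Theta>" "\<theta>' \<in> \<Theta>" "\<theta> \<le> \<theta>'"
  shows "st_le (distr (EDF \<nu> a \<kappa> \<theta> v \<phi>) borel (\<lambda>y. c * y))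
               (distr (EDF \<nu> a \<kappa> \<theta>' v \<phi>) borel (\<lambda>y. c * y))"
  using assms by (intro st_le_distr_mult st_le_EDF sets_EDF)

lemma real_distribution_scaled_EDF:
  assumes "cumulant_fun \<nu> a \<kappa> \<Theta>" and "0 < \<phi>" "0 < v" and "\<theta> \<in> \<Theta>"
  shows "real_distribution (distr (EDF \<nu> a \<kappa> \<theta> v \<phi>) borel (\<lambda>y. c * y))"
proof -
  interpret real_distribution "EDF \<nu> a \<kappa> \<theta> v \<phi>"
    using assms by (rule real_distribution_EDF)
  show ?thesis
    by (simp add: measurable_cong_sets[OF events_eq_borel refl])
qed

lemma sum_law_scaled_EDF:
  fixes v :: "'i \<Rightarrow> real"
  assumes cf: "cumulant_fun \<nu> a \<kappa> \<Theta>" and "0 < \<phi>" and "finite I" "I \<noteq> {}"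
    and v: "\<And>i. i \<in> I \<Longrightarrow> 0 < v i" and "\<theta> \<in> interior \<Theta>"
  defines "V \<equiv> \<Sum>i\<in>I. v i"
  shows "sum_law (\<lambda>i. distr (EDF \<nu> a \<kappa> \<theta> (v i) \<phi>) borel (\<lambda>y. v i / V * y)) I
           = EDF \<nu> a \<kappa> \<theta> V \<phi>"
proof -
  have "0 < V"
    unfolding V_def using assms by (intro sum_pos) auto
  obtain \<epsilon> where "0 < \<epsilon>" and ball: "ball \<theta> \<epsilon> \<subseteq> \<Theta>"
    using \<open>\<theta> \<in> interior \<Theta>\<close> by (auto simp: mem_interior)
  then have "\<theta> \<in> \<Theta>"
    by auto
  define \<delta> where "\<delta> = \<epsilon> * V / \<phi>"
  have "0 < \<delta>"
    using \<open>0 < \<epsilon>\<close> \<open>0 < V\<close> \<open>0 < \<phi>\<close> by (simp add: \<delta>_def)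
  have shifted: "\<theta> + s * \<phi> / V \<in> \<Theta>" if "\<bar>s\<bar> < \<delta>" for s
  proof -
    have "\<bar>s * \<phi> / V\<bar> < \<epsilon>"
      using that \<open>0 < V\<close> \<open>0 < \<phi>\<close> by (simp add: \<delta>_def abs_mult abs_divide field_simps)
    then show ?thesis
      using ball by (auto simp: dist_real_def)
  qed
  define L where "L s = exp (V / \<phi> * (\<kappa> (\<theta> + s * \<phi> / V) - \<kappa> \<theta>))" for s
  define Q where "Q i = distr (EDF \<nu> a \<kappa> \<theta> (v i) \<phi>) borel (\<lambda>y. v i / V * y)" for i
  have Q: "real_distribution (Q i)" if "i \<in> I" for i
    unfolding Q_def using cf \<open>0 < \<phi>\<close> v[OF that] \<open>\<theta> \<in> \<Theta>\<close> by (rule real_distribution_scaled_EDF)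
  have Laplace_Q: "(\<integral>\<^sup>+x. ennreal (exp (s * x)) \<partial>Q i) = ennreal (exp (v i / \<phi> * (\<kappa> (\<theta> + s * \<phi> / V) - \<kappa> \<theta>)))"
    if "i \<in> I" "\<bar>s\<bar> < \<delta>" for i s
  proof -
    note sets = sets_EDF[OF cf \<open>0 < \<phi>\<close> v[OF that(1)]]
    have "(\<integral>\<^sup>+x. ennreal (exp (s * x)) \<partial>Q i)
        = (\<integral>\<^sup>+y. ennreal (exp (s * (v i / V) * y)) \<partial>EDF \<nu> a \<kappa> \<theta> (v i) \<phi>)"
      unfolding Q_def by (subst nn_integral_distr) (simp_all add: measurable_cong_sets[OF sets refl] mult.assoc)
    also have "s * (v i / V) * \<phi> / v i = s * \<phi> / V"
      using v[OF that(1)] by simp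
    then have "(\<integral>\<^sup>+y. ennreal (exp (s * (v i / V) * y)) \<partial>EDF \<nu> a \<kappa> \<theta> (v i) \<phi>)
        = ennreal (exp (v i / \<phi> * (\<kappa> (\<theta> + s * \<phi> / V) - \<kappa> \<theta>)))"
      using nn_integral_exp_EDF[OF cf \<open>0 < \<phi>\<close> v[OF that(1)] \<open>\<theta> \<in> \<Theta>\<close>, of "s * (v i / V)"] shifted[OF that(2)]
      by simp
    finally show ?thesis .
  qed
  have "(\<integral>\<^sup>+x. ennreal (exp (s * x)) \<partial>sum_law Q I) = ennreal (L s)" if "\<bar>s\<bar> < \<delta>" for s
  proof -
    have "(\<integral>\<^sup>+x. ennreal (exp (s * x)) \<partial>sum_law Q I)
        = (\<Prod>i\<in>I. ennreal (exp (v i / \<phi> * (\<kappa> (\<theta> + s * \<phi> / V) - \<kappa> \<theta>))))"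
      using that Q Laplace_Q \<open>finite I\<close> by (simp add: nn_integral_exp_sum_law)
    also have "\<dots> = ennreal (L s)"
      using \<open>finite I\<close>
      by (simp add: prod_ennreal exp_sum[symmetric] L_def V_def sum_divide_distrib[symmetric] sum_distrib_right)
    finally show ?thesis .
  qed
  moreover have "(\<integral>\<^sup>+x. ennreal (exp (s * x)) \<partial>EDF \<nu> a \<kappa> \<theta> V \<phi>) = ennreal (L s)" if "\<bar>s\<bar> < \<delta>" for s
    using nn_integral_exp_EDF[OF cf \<open>0 < \<phi>\<close> \<open>0 < V\<close> \<open>\<theta> \<in> \<Theta>\<close> shifted[OF that]] by (simp add: L_def)
  ultimately have "sum_law Q I = EDF \<nu> a \<kappa> \<theta> V \<phi>"
    using real_distribution_sum_law[of I Q] Q real_distribution_EDF[OF cf \<open>0 < \<phi>\<close> \<open>0 < V\<close> \<open>\<theta> \<in> \<Theta>\<close>]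
    by (intro Laplace_uniqueness[OF _ _ \<open>0 < \<delta>\<close>]) auto
  then show ?thesis
    unfolding Q_def[abs_def] .
qed

theorem lemma3p6:
  fixes M :: "'s measure" and Y :: "int \<Rightarrow> 's \<Rightarrow> real"
    and \<nu> :: "real \<Rightarrow> real measure" and a :: "real \<Rightarrow> real \<Rightarrow> real"
    and \<kappa> :: "real \<Rightarrow> real" and \<Theta> :: "real set"
    and \<theta> v :: "int \<Rightarrow> real" and \<phi> :: real and j k :: int
  assumes "cumulant_fun \<nu> a \<kappa> \<Theta>" and "A1 \<nu> \<Theta>"
    and "\<phi> > 0" and "j \<le> k"
    and "prob_space M"
    and "prob_space.indep_vars M (\<lambda>_. borel) Y {j..k}"
    and "\<And>i. i \<in> {j..k} \<Longrightarrow> v i > 0"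
    and "\<And>i. i \<in> {j..k} \<Longrightarrow> \<theta> i \<in> interior \<Theta>"
    and "\<And>i. i \<in> {j..k} \<Longrightarrow> distr M borel (Y i) = EDF \<nu> a \<kappa> (\<theta> i) (v i) \<phi>"
    and "\<And>i i'. i \<in> {j..k} \<Longrightarrow> i' \<in> {j..k} \<Longrightarrow> i \<le> i' \<Longrightarrow> \<theta> i \<le> \<theta> i'"
  shows "st_le (EDF \<nu> a \<kappa> (\<theta> j) (\<Sum>i\<in>{j..k}. v i) \<phi>)
              (distr M borel (\<lambda>\<omega>. (\<Sum>i\<in>{j..k}. v i * Y i \<omega>) / (\<Sum>i\<in>{j..k}. v i)))
       \<and> st_le (distr M borel (\<lambda>\<omega>. (\<Sum>i\<in>{j..k}. v i * Y i \<omega>) / (\<Sum>i\<in>{j..k}. v i)))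
              (EDF \<nu> a \<kappa> (\<theta> k) (\<Sum>i\<in>{j..k}. v i) \<phi>)"
proof -
  define I where "I = {j..k}"
  define V where "V = (\<Sum>i\<in>I. v i)"
  define Q where "Q t i = distr (EDF \<nu> a \<kappa> (t i) (v i) \<phi>) borel (\<lambda>y. v i / V * y)"
    for t :: "int \<Rightarrow> real" and i
  have I: "finite I" "I \<noteq> {}" "j \<in> I" "k \<in> I"
    using \<open>j \<le> k\<close> by (auto simp: I_def)
  have v: "0 < v i" and \<theta>: "\<theta> i \<in> \<Theta>" if "i \<in> I" for i
    using assms(7,8)[of i] that interior_subset by (auto simp: I_def)
  have \<theta>_mono: "\<theta> j \<le> \<theta> i" "\<theta> i \<le> \<theta> k" if "i \<in> I" for i
    using assms(10)[of j i] assms(10)[of i k] that I by (simp_all add: I_def)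
  have "0 < V"
    unfolding V_def using I v by (intro sum_pos) auto
  have Q: "real_distribution (Q t i)" if "i \<in> I" "t i \<in> \<Theta>" for t i
    unfolding Q_def using assms(1,3) v[OF that(1)] that(2) by (rule real_distribution_scaled_EDF)
  have Q_mono: "st_le (Q t i) (Q t' i)" if "i \<in> I" "t i \<in> \<Theta>" "t' i \<in> \<Theta>" "t i \<le> t' i" for t t' i
    unfolding Q_def using assms(1,3) v that \<open>0 < V\<close> by (intro st_le_scaled_EDF) auto
  have "distr M borel (\<lambda>\<omega>. (\<Sum>i\<in>I. v i * Y i \<omega>) / V) = distr M borel (\<lambda>\<omega>. \<Sum>i\<in>I. v i / V * Y i \<omega>)"
    by (simp add: sum_divide_distrib)
  also have "\<dots> = sum_law (\<lambda>i. distr (distr M borel (Y i)) borel (\<lambda>y. v i / V * y)) I"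
    using assms(5,6) unfolding I_def by (rule prob_space.distr_weighted_sum_indep_vars)
  also have "\<dots> = sum_law (Q \<theta>) I"
    using assms(9) by (intro sum_law_cong) (simp add: Q_def I_def)
  finally have law: "distr M borel (\<lambda>\<omega>. (\<Sum>i\<in>I. v i * Y i \<omega>) / V) = sum_law (Q \<theta>) I" .
  have "sum_law (Q (\<lambda>_. \<theta> j)) I = EDF \<nu> a \<kappa> (\<theta> j) V \<phi>"
    and "sum_law (Q (\<lambda>_. \<theta> k)) I = EDF \<nu> a \<kappa> (\<theta> k) V \<phi>"
    unfolding Q_def V_def using assms(1,3,8) I v by (auto simp: I_def intro!: sum_law_scaled_EDF)
  moreover have "st_le (sum_law (Q (\<lambda>_. \<theta> j)) I) (sum_law (Q \<theta>) I)"
    and "st_le (sum_law (Q \<theta>) I) (sum_law (Q (\<lambda>_. \<theta> k)) I)"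
    using I \<theta> \<theta>_mono by (auto intro!: st_le_sum_law Q Q_mono)
  ultimately show ?thesis
    using law by (simp add: I_def V_def)
qed

end
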